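(* Let $s$ and $d$ be positive integers with $s\leqslant d/2$ and $d$ even. Then $$ n(d-s,d)\geqslant \sum_{i=0}^{\frac d2 -s}\binom{d-s}{i}+\sum_{k=1}^{s-1}2^k\binom{d-s}{\frac d2-s+k}+2^s\sum_{i=\frac d2}^{d-s}\binom{d-s}{i}. $$
   Context: A box in $\mathbb{R}^d$ is an axis-parallel $d$-dimensional cuboid. For a positive integer $k\leqslant d$, two boxes in $\mathbb{R}^d$ are called $k$-neighborly if their intersection is a box of dimension at least $d-k$ and at most $d-1$. $n(k,d)$ denotes the maximum size of a family of pairwise $k$-neighborly boxes in $\mathbb{R}^d$. Equivalently, $n(k,d)$ is the maximum number of strings in $\{0,1,*\}^d$ such that any two distinct ones $u,v$ satisfy $1\leqslant \mathrm{dist}(u,v)\leqslant k$, where $\mathrm{dist}(u,v)$ is the number of positions $i$ with $u_i\neq v_i$ and $u_i,v_i\in\{0,1\}$. *)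

theory Defs
  imports Main
begin

datatype letter = Zero | One | Star

definition sdist :: "letter list \<Rightarrow> letter list \<Rightarrow> nat" where
  "sdist u v = card {i. i < length u \<and> i < length v \<and> u ! i \<noteq> v ! i
                        \<and> u ! i \<noteq> Star \<and> v ! i \<noteq> Star}"

definition neighborly_family :: "nat \<Rightarrow> nat \<Rightarrow> letter list set \<Rightarrow> bool" where
  "neighborly_family k d F \<longleftrightarrow>
     (\<forall>u\<in>F. length u = d) \<and>
     (\<forall>u\<in>F. \<forall>v\<in>F. u \<noteq> v \<longrightarrow> 1 \<le> sdist u v \<and> sdist u v \<le> k)"

text \<open>n(k,d): maximum size of such a family (a finite maximum, as all strings
  of length d over a 3-letter alphabet form a finite set).\<close>
definition nkd :: "nat \<Rightarrow> nat \<Rightarrow> nat" where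
  "nkd k d = Max {card F | F. neighborly_family k d F}"

end

theory Submission
  imports Defs
begin

text \<open>
  Write \<open>d = 2s + 2h\<close>. Every binary word \<open>w = a b\<close> of length \<open>d - s\<close>, with \<open>|a| = s\<close> and
  \<open>|b| = 2h\<close>, contributes all strings \<open>w x\<close> where \<open>x \<in> {0,1,*}\<^sup>s\<close> is free exactly on a set
  of coordinates obtained from \<open>a\<close> by greedily shifting its number of ones by
  \<open>e = #\<^sub>1 b - h\<close> (where \<open>#\<^sub>1\<close> counts ones). This block has \<open>2\<^sup>m\<close> elements with
  \<open>m = min s (#\<^sub>1 w - h)\<close>, and summing over \<open>#\<^sub>1 w\<close> gives the bound.
  Distinct strings differ in \<open>w\<close> or in \<open>x\<close>, so their distance is positive. Their distance is
  at most the Hamming distance of the words plus the number of common free coordinates; the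
  latter is at most the number of agreements of \<open>a, a'\<close> plus \<open>|e + e'|\<close>, and the Hamming
  distance of \<open>b, b'\<close> plus \<open>|e + e'|\<close> is at most \<open>2h\<close>, so the total is at most \<open>s + 2h\<close>.
\<close>

lemma sdist_Nil [simp]: "sdist [] v = 0"
  by (simp add: sdist_def)

lemma sdist_Cons:
  "sdist (x # u) (y # v) = (if x \<noteq> y \<and> x \<noteq> Star \<and> y \<noteq> Star then 1 else 0) + sdist u v"
proof -
  define D where "D u v i \<longleftrightarrow> i < length u \<and> i < length v \<and>
    u ! i \<noteq> v ! i \<and> u ! i \<noteq> Star \<and> v ! i \<noteq> Star" for u v i
  have "{i. D (x # u) (y # v) i} = {i. i = 0 \<and> D (x # u) (y # v) 0} \<union> Suc ` {i. D u v i}"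
    by (auto simp: D_def image_iff less_Suc_eq_0_disj)
  then show ?thesis
    unfolding sdist_def D_def[symmetric] by (simp add: card_image D_def)
qed

lemma sdist_append:
  "length u = length v \<Longrightarrow> sdist (u @ u') (v @ v') = sdist u v + sdist u' v'"
  by (induction u v rule: list_induct2) (simp_all add: sdist_Cons)

lemma card_le_nkd:
  assumes "neighborly_family k d F"
  shows "card F \<le> nkd k d"
proof -
  let ?U = "{u :: letter list. length u = d}"
  have "finite (UNIV :: letter set)"
  proof -
    have "(UNIV :: letter set) = {Zero, One, Star}"
      using letter.exhaust by auto
    then show ?thesis
      by (metis finite.emptyI finite.insertI)
  qed
  then have "finite ?U"
    using finite_lists_length_eq[of "UNIV :: letter set" d] by simp
  moreover have "G \<subseteq> ?U" if "neighborly_family k d G" for G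
    using that by (auto simp: neighborly_family_def)
  ultimately have "{card G | G. neighborly_family k d G} \<subseteq> {..card ?U}"
    by (auto intro: card_mono)
  then have "finite {card G | G. neighborly_family k d G}"
    by (rule finite_subset) simp
  then show ?thesis
    unfolding nkd_def using assms by (intro Max_ge) auto
qed

fun hamming :: "bool list \<Rightarrow> bool list \<Rightarrow> nat" where
  "hamming (x # a) (y # b) = (if x \<noteq> y then 1 else 0) + hamming a b"
| "hamming _ _ = 0"

lemma hamming_pos: "length a = length b \<Longrightarrow> a \<noteq> b \<Longrightarrow> 1 \<le> hamming a b"
  by (induction a b rule: list_induct2) auto

lemma hamming_append:
  "length a = length b \<Longrightarrow> hamming (a @ a') (b @ b') = hamming a b + hamming a' b'"
  by (induction a b rule: list_induct2) auto

lemma hamming_plus_abs_count_le: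
  "length a = length b \<Longrightarrow>
   int (hamming a b) + \<bar>int (count_list a True) + int (count_list b True) - int (length a)\<bar>
     \<le> int (length a)"
proof (induction a b rule: list_induct2)
  case (Cons x a y b)
  then show ?case by (cases x; cases y; simp add: abs_if split: if_splits)
qed simp

lemma card_words_count_True: "card {w. length w = n \<and> count_list w True = k} = n choose k"
proof (induction n arbitrary: k)
  case 0
  have "{w. length w = 0 \<and> count_list w True = k} = (if k = 0 then {[]} else {})" by auto
  then show ?case by simp
next
  case (Suc n)
  have fin: "finite {w :: bool list. length w = n \<and> P w}" for P
    using finite_lists_length_eq[of "UNIV :: bool set" n] by (auto elim: finite_subset[rotated])
  show ?case
  proof (cases k)
    case 0
    have "{w. length w = Suc n \<and> count_list w True = k} =
        Cons False ` {w. length w = n \<and> count_list w True = 0}"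
      using 0 by (auto simp: length_Suc_conv split: if_splits)
    then show ?thesis using Suc.IH 0 by (simp add: card_image)
  next
    case (Suc j)
    have split: "{w. length w = Suc n \<and> count_list w True = k} =
        Cons True ` {w. length w = n \<and> count_list w True = j} \<union>
        Cons False ` {w. length w = n \<and> count_list w True = k}"
      using Suc by (auto simp: length_Suc_conv split: if_splits)
    have "card {w. length w = Suc n \<and> count_list w True = k} =
        card {w. length w = n \<and> count_list w True = j} +
        card {w. length w = n \<and> count_list w True = k}"
      unfolding split by (subst card_Un_disjoint) (auto simp: fin card_image)
    then show ?thesis using Suc.IH Suc by simp
  qed
qed

lemma sum_words_by_count_True:
  fixes f :: "nat \<Rightarrow> 'a :: semiring_1"
  shows "(\<Sum>w\<in>{w. length w = n}. f (count_list w True)) = (\<Sum>i\<le>n. of_nat (n choose i) * f i)"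
proof -
  let ?W = "{w :: bool list. length w = n}"
  have "finite ?W"
    using finite_lists_length_eq[of "UNIV :: bool set" n] by simp
  then have "(\<Sum>w\<in>?W. f (count_list w True)) =
      (\<Sum>i\<le>n. \<Sum>w\<in>{w \<in> ?W. count_list w True = i}. f (count_list w True))"
    by (intro sum.group[symmetric]) (auto simp: count_le_length)
  also have "\<dots> = (\<Sum>i\<le>n. \<Sum>w\<in>{w \<in> ?W. count_list w True = i}. f i)"
    by (intro sum.cong) auto
  also have "\<dots> = (\<Sum>i\<le>n. of_nat (n choose i) * f i)"
    using card_words_count_True[of n] by simp
  finally show ?thesis .
qed

fun adjust_ones :: "int \<Rightarrow> bool list \<Rightarrow> bool list" where
  "adjust_ones e [] = []"
| "adjust_ones e (x # a) =
     (if x then (if e < 0 then False # adjust_ones (e + 1) a else True # adjust_ones e a)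
      else (if e > 0 then True # adjust_ones (e - 1) a else False # adjust_ones e a))"

lemma length_adjust_ones [simp]: "length (adjust_ones e a) = length a"
  by (induction a arbitrary: e) auto

lemma count_adjust_ones:
  "int (count_list (adjust_ones e a) True) =
   max 0 (min (int (length a)) (int (count_list a True) + e))"
proof (induction a arbitrary: e)
  case (Cons x a)
  have "count_list a True \<le> length a" by (rule count_le_length)
  then show ?case using Cons.IH by (cases x) auto
qed simp

fun common_ones :: "bool list \<Rightarrow> bool list \<Rightarrow> nat" where
  "common_ones (x # a) (y # b) = (if x \<and> y then 1 else 0) + common_ones a b"
| "common_ones _ _ = 0"

text \<open>Adjusting both words from the left keeps opposite adjustments aligned, which is why
  \<open>|e + e'|\<close> rather than \<open>|e| + |e'|\<close> appears.\<close>

lemma common_ones_adjust_ones_le: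
  "length a = length b \<Longrightarrow>
   int (common_ones (adjust_ones e a) (adjust_ones e' b)) + int (hamming a b)
     \<le> int (length a) + \<bar>e + e'\<bar>"
proof (induction a b arbitrary: e e' rule: list_induct2)
  case (Cons x a y b)
  then show ?case by (cases x; cases y; simp) (smt (verit) Cons.IH)+
qed simp

fun subcube :: "bool list \<Rightarrow> letter list set" where
  "subcube [] = {[]}"
| "subcube (b # m) =
     (if b then Cons Zero ` subcube m \<union> Cons One ` subcube m else Cons Star ` subcube m)"

lemma length_subcube: "t \<in> subcube m \<Longrightarrow> length t = length m"
  by (induction m arbitrary: t) (auto split: if_splits)

lemma finite_subcube: "finite (subcube m)"
  by (induction m) auto

lemma card_subcube: "card (subcube m) = 2 ^ count_list m True"
proof (induction m)
  case (Cons b m)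
  have "card (Cons Zero ` subcube m \<union> Cons One ` subcube m) = 2 * card (subcube m)"
    by (subst card_Un_disjoint) (auto simp: finite_subcube card_image)
  then show ?case using Cons.IH by (simp add: card_image)
qed simp

lemma sdist_subcube_pos:
  "t \<in> subcube m \<Longrightarrow> t' \<in> subcube m \<Longrightarrow> t \<noteq> t' \<Longrightarrow> 1 \<le> sdist t t'"
proof (induction m arbitrary: t t')
  case (Cons b m)
  from Cons.prems show ?case
    by (cases b) (auto simp: sdist_Cons split: if_splits dest: Cons.IH)
qed simp

lemma sdist_subcube_le_common_ones:
  "t \<in> subcube m \<Longrightarrow> t' \<in> subcube m' \<Longrightarrow> length m = length m' \<Longrightarrow>
   sdist t t' \<le> common_ones m m'"
proof (induction m arbitrary: m' t t')
  case (Cons b m)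
  then obtain b' m2 where "m' = b' # m2" by (cases m') auto
  with Cons.prems show ?case
    by (cases b; cases b') (auto simp: sdist_Cons split: if_splits dest!: Cons.IH)
qed simp

definition bit :: "bool \<Rightarrow> letter" where
  "bit b = (if b then One else Zero)"

lemma inj_bit: "inj bit"
  by (auto simp: inj_def bit_def split: if_splits)

lemma sdist_map_bit: "length w = length w' \<Longrightarrow> sdist (map bit w) (map bit w') = hamming w w'"
  by (induction w w' rule: list_induct2) (auto simp: sdist_Cons bit_def)

definition free_mask :: "nat \<Rightarrow> nat \<Rightarrow> bool list \<Rightarrow> bool list" where
  "free_mask s h w = adjust_ones (int (count_list (drop s w) True) - int h) (take s w)"

lemma count_free_mask:
  assumes "length w = s + 2 * h"
  shows "count_list (free_mask s h w) True = min s (count_list w True - h)"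
proof -
  have "count_list w True = count_list (take s w) True + count_list (drop s w) True"
    by (metis append_take_drop_id count_list_append)
  then show ?thesis
    using count_adjust_ones[of "int (count_list (drop s w) True) - int h" "take s w"] assms
    unfolding free_mask_def by simp
qed

lemma hamming_plus_common_free_le:
  assumes w: "length w = s + 2 * h" and w': "length w' = s + 2 * h"
  shows "hamming w w' + common_ones (free_mask s h w) (free_mask s h w') \<le> s + 2 * h"
proof -
  define a b a' b' where "a = take s w" and "b = drop s w" and "a' = take s w'" and "b' = drop s w'"
  have len: "length a = s" "length a' = s" "length b = 2 * h" "length b' = 2 * h"
    using w w' by (auto simp: a_def b_def a'_def b'_def)
  define e e' where "e = int (count_list b True) - int h" and "e' = int (count_list b' True) - int h"
  have "hamming w w' = hamming a a' + hamming b b'"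
    using hamming_append[of a a' b b'] len by (simp add: a_def b_def a'_def b'_def)
  moreover have "int (common_ones (free_mask s h w) (free_mask s h w')) + int (hamming a a')
      \<le> int s + \<bar>e + e'\<bar>"
    using common_ones_adjust_ones_le[of a a' e e'] len
    unfolding free_mask_def a_def b_def a'_def b'_def e_def e'_def by simp
  moreover have "int (hamming b b') + \<bar>e + e'\<bar> \<le> int (2 * h)"
    using hamming_plus_abs_count_le[of b b'] len by (simp add: e_def e'_def algebra_simps)
  ultimately show ?thesis by linarith
qed

definition block_family :: "nat \<Rightarrow> nat \<Rightarrow> letter list set" where
  "block_family s h =
     (\<Union>w\<in>{w. length w = s + 2 * h}. (\<lambda>t. map bit w @ t) ` subcube (free_mask s h w))"

lemma neighborly_family_block_family:
  "neighborly_family (s + 2 * h) (2 * s + 2 * h) (block_family s h)"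
  unfolding neighborly_family_def
proof (intro conjI ballI impI)
  fix x assume "x \<in> block_family s h"
  then show "length x = 2 * s + 2 * h"
    by (auto simp: block_family_def free_mask_def dest!: length_subcube)
next
  fix x x' assume "x \<in> block_family s h" "x' \<in> block_family s h" "x \<noteq> x'"
  then obtain w t w' t'
    where w: "length w = s + 2 * h" "t \<in> subcube (free_mask s h w)" "x = map bit w @ t"
    and w': "length w' = s + 2 * h" "t' \<in> subcube (free_mask s h w')" "x' = map bit w' @ t'"
    by (auto simp: block_family_def)
  have dist: "sdist x x' = hamming w w' + sdist t t'"
    using w w' by (simp add: sdist_append sdist_map_bit)
  show "1 \<le> sdist x x'"
  proof (cases "w = w'")
    case True
    then show ?thesis
      using dist sdist_subcube_pos w w' \<open>x \<noteq> x'\<close> by fastforce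
  next
    case False
    then show ?thesis
      using dist hamming_pos[of w w'] w w' by simp
  qed
  have "sdist t t' \<le> common_ones (free_mask s h w) (free_mask s h w')"
    using w w' by (intro sdist_subcube_le_common_ones) (simp_all add: free_mask_def)
  then show "sdist x x' \<le> s + 2 * h"
    using dist hamming_plus_common_free_le[OF w(1) w'(1)] by linarith
qed

lemma card_block_family:
  "card (block_family s h) = (\<Sum>i\<le>s + 2 * h. ((s + 2 * h) choose i) * 2 ^ min s (i - h))"
proof -
  let ?W = "{w :: bool list. length w = s + 2 * h}"
  have "card (block_family s h) =
      (\<Sum>w\<in>?W. card ((\<lambda>t. map bit w @ t) ` subcube (free_mask s h w)))"
    unfolding block_family_def using finite_lists_length_eq[of "UNIV :: bool set"] inj_bit
    by (intro card_UN_disjoint) (auto simp: finite_subcube inj_map_eq_map)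
  also have "\<dots> = (\<Sum>w\<in>?W. 2 ^ min s (count_list w True - h))"
    by (intro sum.cong) (auto simp: card_image inj_on_def card_subcube count_free_mask)
  also have "\<dots> = (\<Sum>i\<le>s + 2 * h. ((s + 2 * h) choose i) * 2 ^ min s (i - h))"
    using sum_words_by_count_True[where f = "\<lambda>i. 2 ^ min s (i - h) :: nat"] by simp
  finally show ?thesis .
qed

lemma sum_pow_min_split:
  fixes c :: "nat \<Rightarrow> nat"
  assumes "0 < s" and "s + h \<le> n"
  shows "(\<Sum>i\<le>n. c i * 2 ^ min s (i - h)) =
     (\<Sum>i=0..h. c i) + (\<Sum>k=1..s - 1. 2 ^ k * c (h + k)) + 2 ^ s * (\<Sum>i=s + h..n. c i)"
proof -
  let ?f = "\<lambda>i. c i * 2 ^ min s (i - h)"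
  have "(\<Sum>i\<le>n. ?f i) = sum ?f ({0..h} \<union> {h + 1..<s + h} \<union> {s + h..n})"
    using assms by (intro sum.cong) auto
  also have "\<dots> = sum ?f ({0..h} \<union> {h + 1..<s + h}) + sum ?f {s + h..n}"
    using assms by (intro sum.union_disjoint) auto
  also have "sum ?f ({0..h} \<union> {h + 1..<s + h}) = sum ?f {0..h} + sum ?f {h + 1..<s + h}"
    by (rule sum.union_disjoint) auto
  also have "sum ?f {0..h} = (\<Sum>i=0..h. c i)"
    by simp
  also have "sum ?f {h + 1..<s + h} = (\<Sum>k=1..s - 1. 2 ^ k * c (h + k))"
  proof -
    have "sum ?f {h + 1..<s + h} = (\<Sum>k=1..<s. ?f (k + h))"
      by (subst sum.shift_bounds_nat_ivl[symmetric]) (simp add: add.commute)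
    also have "\<dots> = (\<Sum>k=1..s - 1. 2 ^ k * c (h + k))"
      using assms by (intro sum.cong) (auto simp: add.commute)
    finally show ?thesis .
  qed
  also have "sum ?f {s + h..n} = 2 ^ s * (\<Sum>i=s + h..n. c i)"
    by (simp add: sum_distrib_left mult.commute, intro sum.cong) auto
  finally show ?thesis .
qed

theorem theorem1:
  fixes s d :: nat
  assumes "0 < s" and "0 < d" and "even d" and "2 * s \<le> d"
  shows "nkd (d - s) d \<ge>
     (\<Sum>i=0..d div 2 - s. (d - s) choose i)
     + (\<Sum>k=1..s - 1. 2 ^ k * ((d - s) choose (d div 2 - s + k)))
     + 2 ^ s * (\<Sum>i=d div 2..d - s. (d - s) choose i)"
proof -
  define h where "h = d div 2 - s"
  have d: "d = 2 * s + 2 * h" and d_minus_s: "d - s = s + 2 * h" and half_d: "d div 2 = s + h"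
    using assms by (auto simp: h_def)
  have "card (block_family s h) \<le> nkd (d - s) d"
    using card_le_nkd[OF neighborly_family_block_family] d d_minus_s by simp
  moreover have "card (block_family s h) =
     (\<Sum>i=0..h. (s + 2 * h) choose i)
     + (\<Sum>k=1..s - 1. 2 ^ k * ((s + 2 * h) choose (h + k)))
     + 2 ^ s * (\<Sum>i=s + h..s + 2 * h. (s + 2 * h) choose i)"
    unfolding card_block_family using assms(1) by (rule sum_pow_min_split) simp
  ultimately show ?thesis
    unfolding d_minus_s half_d h_def[symmetric] by simp
qed

end
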